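(* Let $m,n,q_1,\dots,q_m$ be positive integers with $Q=q_1+\dots+q_m\le n$, and let $G$ and $H$ be two graphs on the vertex set $[m]$. Let $X$ and $Y$ be independent random graphs with $X\in\mathcal{G}(n,p_1)$ and $Y\in\mathcal{G}(n,p_2)$. Suppose that for every set $J\subseteq[m]$ with $|E(G|_J)|+|E(H|_J)|\ge 1$ we have \[ p_1^{|E(G|_J)|}\,p_2^{|E(H|_J)|}\prod_{j\in J}q_j\ \ge\ 3\cdot 2^{m+1}\,Q\log n . \] Then with probability at least $1-n^{-Q}$, the pair $(G,H)$ is $(q_1,\dots,q_m)$-embeddable in $(X,Y)$.
   Context: All graphs are finite and simple; $[m]=\{1,\dots,m\}$; for $S\subseteq V(G)$, $G|_S$ is the induced subgraph of $G$ on $S$. $\mathcal{G}(n,p)$ is the Erdős–Rényi random graph on $n$ vertices with edge probability $p$; $\log$ is the natural logarithm. Let $X,Y$ be graphs on $n$ vertices, $G,H$ graphs on vertex set $[m]$, $\sigma:V(X)\to V(Y)$ a bijection, and $V_1,\dots,V_m$ pairwise disjoint subsets of $V(Y)$. The pair $(G,H)$ is embeddable in $(X,Y)$ with respect to $V_1,\dots,V_m$ and $\sigma$ if there exist vertices $v_i\in V_i$ ($i\in[m]$) such that for all $i,j\in[m]$: $\{i,j\}\in E(H)\Rightarrow\{v_i,v_j\}\in E(Y)$, and $\{i,j\}\in E(G)\Rightarrow\{\sigma^{-1}(v_i),\sigma^{-1}(v_j)\}\in E(X)$. For nonnegative integers $q_1,\dots,q_m$ with $q_1+\dots+q_m\le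 n$, the pair $(G,H)$ is $(q_1,\dots,q_m)$-embeddable in $(X,Y)$ if it is embeddable in $(X,Y)$ with respect to every list $V_1,\dots,V_m$ of pairwise disjoint subsets of $V(Y)$ with $|V_i|=q_i$ for all $i$, and every bijection $\sigma:V(X)\to V(Y)$. *)

theory Defs
  imports "HOL-Probability.Probability"
begin

text \<open>Simple graphs on a vertex set V are represented by their edge sets:
  sets of 2-element subsets of V.\<close>

definition all_edges :: "nat set \<Rightarrow> nat set set" where
  "all_edges V = {e. e \<subseteq> V \<and> card e = 2}"

definition is_graph_on :: "nat set \<Rightarrow> nat set set \<Rightarrow> bool" where
  "is_graph_on V E \<longleftrightarrow> E \<subseteq> all_edges V"

definition induced_edges :: "nat set set \<Rightarrow> nat set \<Rightarrow> nat set set" where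
  "induced_edges E J = {e \<in> E. e \<subseteq> J}"

definition gnp :: "nat \<Rightarrow> real \<Rightarrow> nat set set pmf" where
  "gnp n p = map_pmf (\<lambda>f. {e \<in> all_edges {1..n}. f e})
      (Pi_pmf (all_edges {1..n}) False (\<lambda>_. bernoulli_pmf p))"

definition embeddable_wrt ::
  "nat \<Rightarrow> nat \<Rightarrow> nat set set \<Rightarrow> nat set set \<Rightarrow> nat set set \<Rightarrow> nat set set
   \<Rightarrow> (nat \<Rightarrow> nat set) \<Rightarrow> (nat \<Rightarrow> nat) \<Rightarrow> bool" where
  "embeddable_wrt m n G H X Y V \<sigma> \<longleftrightarrow>
     (\<exists>v. (\<forall>i\<in>{1..m}. v i \<in> V i) \<and>
          (\<forall>i\<in>{1..m}. \<forall>j\<in>{1..m}.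
              ({i, j} \<in> H \<longrightarrow> {v i, v j} \<in> Y) \<and>
              ({i, j} \<in> G \<longrightarrow>
                 {inv_into {1..n} \<sigma> (v i), inv_into {1..n} \<sigma> (v j)} \<in> X)))"

definition q_embeddable ::
  "nat \<Rightarrow> nat \<Rightarrow> (nat \<Rightarrow> nat) \<Rightarrow> nat set set \<Rightarrow> nat set set \<Rightarrow> nat set set
   \<Rightarrow> nat set set \<Rightarrow> bool" where
  "q_embeddable m n q G H X Y \<longleftrightarrow>
     (\<forall>V \<sigma>. (\<forall>i\<in>{1..m}. V i \<subseteq> {1..n} \<and> card (V i) = q i) \<and>
            (\<forall>i\<in>{1..m}. \<forall>j\<in>{1..m}. i \<noteq> j \<longrightarrow> V i \<inter> V j = {}) \<and>
            bij_betw \<sigma> {1..n} {1..n}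
            \<longrightarrow> embeddable_wrt m n G H X Y V \<sigma>)"

end

theory Submission
  imports Defs
begin

text \<open>If \<open>(G, H)\<close> is not \<open>(q\<^sub>1, \<dots>, q\<^sub>m)\<close>-embeddable, some configuration -- classes
  \<open>C\<^sub>i \<subseteq> [n] \<times> [n]\<close> of sizes \<open>q\<^sub>i\<close> with injective projections -- admits no choice
  \<open>c\<^sub>i \<in> C\<^sub>i\<close> whose first coordinates carry \<open>G\<close> in \<open>X\<close> and whose second coordinates carry
  \<open>H\<close> in \<open>Y\<close>. For a fixed configuration this says that none of \<open>\<Prod> q\<^sub>i\<close> increasing events
  occurs, which the extended Janson inequality (derived here from Harris' inequality) bounds by
  \<open>exp (-\<mu>\<^sup>2 / (2 D))\<close>, \<open>D\<close> being the total weight of the overlapping ordered pairs of events.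
  Two choices agreeing exactly on \<open>J\<close> share precisely the edges induced on \<open>J\<close>, so the density
  hypothesis gives \<open>D \<le> 2\<^sup>m \<mu>\<^sup>2 / K\<close> and hence the bound \<open>n\<^sup>-\<^sup>3\<^sup>Q\<close>. A union bound over
  the at most \<open>n\<^sup>2\<^sup>Q\<close> configurations concludes.\<close>

section \<open>Product measures on the subsets of a finite set\<close>

definition subset_prob :: "'a set \<Rightarrow> ('a \<Rightarrow> real) \<Rightarrow> 'a set \<Rightarrow> real" where
  "subset_prob E p T = (\<Prod>e\<in>E. if e \<in> T then p e else 1 - p e)"

definition subset_expect :: "'a set \<Rightarrow> ('a \<Rightarrow> real) \<Rightarrow> ('a set \<Rightarrow> real) \<Rightarrow> real" where
  "subset_expect E p f = (\<Sum>T\<in>Pow E. subset_prob E p T * f T)"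

lemma subset_expect_empty [simp]: "subset_expect {} p f = f {}"
  by (simp add: subset_expect_def subset_prob_def)

lemma subset_expect_insert:
  assumes "finite E" "x \<notin> E"
  shows "subset_expect (insert x E) p f =
           subset_expect E p (\<lambda>T. p x * f (insert x T) + (1 - p x) * f T)"
proof -
  have disj: "Pow E \<inter> insert x ` Pow E = {}" and inj: "inj_on (insert x) (Pow E)"
    using assms by (auto simp: inj_on_def)
  have with_x: "subset_prob (insert x E) p (insert x T) = p x * subset_prob E p T" if "T \<subseteq> E" for T
    unfolding subset_prob_def using assms by (auto simp: prod.insert intro!: prod.cong)
  have without_x: "subset_prob (insert x E) p T = (1 - p x) * subset_prob E p T" if "T \<subseteq> E" for T
    unfolding subset_prob_def using assms that by (auto simp: prod.insert)
  have "subset_expect (insert x E) p f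
      = (\<Sum>T\<in>Pow E. subset_prob (insert x E) p T * f T)
        + (\<Sum>T\<in>insert x ` Pow E. subset_prob (insert x E) p T * f T)"
    unfolding subset_expect_def Pow_insert using assms disj by (intro sum.union_disjoint) auto
  also have "\<dots> = (\<Sum>T\<in>Pow E. subset_prob E p T * ((1 - p x) * f T))
                + (\<Sum>T\<in>Pow E. subset_prob E p T * (p x * f (insert x T)))"
    using inj by (simp add: sum.reindex, intro arg_cong2[where f = "(+)"] sum.cong)
      (auto simp: with_x without_x)
  finally show ?thesis
    unfolding subset_expect_def by (simp add: sum.distrib[symmetric] algebra_simps)
qed

lemma subset_prob_nonneg:
  "(\<And>e. e \<in> E \<Longrightarrow> 0 \<le> p e \<and> p e \<le> 1) \<Longrightarrow> 0 \<le> subset_prob E p T"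
  unfolding subset_prob_def by (intro prod_nonneg) auto

lemma subset_expect_mono:
  assumes "\<And>e. e \<in> E \<Longrightarrow> 0 \<le> p e \<and> p e \<le> 1" "\<And>T. T \<subseteq> E \<Longrightarrow> f T \<le> g T"
  shows "subset_expect E p f \<le> subset_expect E p g"
  unfolding subset_expect_def using assms
  by (intro sum_mono mult_left_mono) (auto intro: subset_prob_nonneg)

lemma subset_expect_nonneg:
  assumes "\<And>e. e \<in> E \<Longrightarrow> 0 \<le> p e \<and> p e \<le> 1" "\<And>T. T \<subseteq> E \<Longrightarrow> 0 \<le> f T"
  shows "0 \<le> subset_expect E p f"
  unfolding subset_expect_def using assms
  by (intro sum_nonneg mult_nonneg_nonneg subset_prob_nonneg) auto

lemma subset_expect_cong:
  "(\<And>T. T \<subseteq> E \<Longrightarrow> f T = g T) \<Longrightarrow> subset_expect E p f = subset_expect E p g"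
  unfolding subset_expect_def by (intro sum.cong) auto

lemma subset_expect_add: "subset_expect E p (\<lambda>T. f T + g T) = subset_expect E p f + subset_expect E p g"
  unfolding subset_expect_def by (simp add: algebra_simps sum.distrib)

lemma subset_expect_diff: "subset_expect E p (\<lambda>T. f T - g T) = subset_expect E p f - subset_expect E p g"
  unfolding subset_expect_def by (simp add: algebra_simps sum_subtractf)

lemma subset_expect_cmult: "subset_expect E p (\<lambda>T. c * f T) = c * subset_expect E p f"
  unfolding subset_expect_def by (simp add: algebra_simps sum_distrib_left)

lemma subset_expect_divide: "subset_expect E p (\<lambda>T. f T / c) = subset_expect E p f / c"
  unfolding subset_expect_def by (simp add: sum_divide_distrib)

lemma subset_expect_sum: "subset_expect E p (\<lambda>T. \<Sum>i\<in>I. f i T) = (\<Sum>i\<in>I. subset_expect E p (f i))"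
  unfolding subset_expect_def by (simp add: sum_distrib_left sum.swap[of _ I])

lemma subset_expect_const: "finite E \<Longrightarrow> subset_expect E p (\<lambda>T. c) = c"
  by (induction E rule: finite_induct) (simp_all add: subset_expect_insert algebra_simps)

lemma subset_expect_eq_subset_prob:
  assumes "finite E" "S \<subseteq> E"
  shows "subset_expect E p (\<lambda>T. of_bool (T = S) * c) = subset_prob E p S * c"
proof -
  have "subset_expect E p (\<lambda>T. of_bool (T = S) * c)
      = (\<Sum>T\<in>Pow E. if T = S then subset_prob E p S * c else 0)"
    unfolding subset_expect_def by (intro sum.cong) auto
  then show ?thesis using assms by simp
qed

lemma subset_expect_split:
  assumes "finite E" "S \<subseteq> E"
  shows "subset_expect E p h =
           subset_expect S p (\<lambda>A. subset_expect (E - S) p (\<lambda>B. h (A \<union> B)))"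
  using finite_subset[OF assms(2,1)] assms(2)
proof (induction S rule: finite_induct)
  case empty
  then show ?case by simp
next
  case (insert x S)
  let ?R = "E - insert x S"
  have R: "E - S = insert x ?R" "x \<notin> ?R" "finite ?R"
    using insert assms by auto
  have "subset_expect E p h = subset_expect S p (\<lambda>A. subset_expect (insert x ?R) p (\<lambda>B. h (A \<union> B)))"
    using insert R(1) by simp
  also have "\<dots> = subset_expect S p (\<lambda>A.
      p x * subset_expect ?R p (\<lambda>B. h (insert x A \<union> B)) + (1 - p x) * subset_expect ?R p (\<lambda>B. h (A \<union> B)))"
    by (simp only: subset_expect_insert[OF R(3,2)] subset_expect_add subset_expect_cmult Un_insert_left Un_insert_right)
  also have "\<dots> = subset_expect (insert x S) p (\<lambda>A. subset_expect ?R p (\<lambda>B. h (A \<union> B)))"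
    using insert by (simp add: subset_expect_insert)
  finally show ?case .
qed

lemma subset_expect_indep:
  assumes "finite E" "S \<subseteq> E" "\<And>T. g T = g (T - S)"
  shows "subset_expect E p (\<lambda>T. of_bool (S \<subseteq> T) * g T) = (\<Prod>e\<in>S. p e) * subset_expect E p g"
proof -
  let ?R = "E - S"
  have finS: "finite S" and finR: "finite ?R" using assms finite_subset by auto
  have g_Un: "g (A \<union> B) = g B" if "A \<subseteq> S" "B \<subseteq> ?R" for A B
  proof -
    have "(A \<union> B) - S = B - S" using that by auto
    then show ?thesis using assms(3) by metis
  qed
  have "subset_expect E p (\<lambda>T. of_bool (S \<subseteq> T) * g T)
      = subset_expect S p (\<lambda>A. of_bool (A = S) * subset_expect ?R p g)"
    unfolding subset_expect_split[OF assms(1,2)]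
  proof (intro subset_expect_cong)
    fix A assume "A \<subseteq> S"
    then have "subset_expect ?R p (\<lambda>B. of_bool (S \<subseteq> A \<union> B) * g (A \<union> B))
        = subset_expect ?R p (\<lambda>B. of_bool (A = S) * g B)"
      by (intro subset_expect_cong) (auto simp: g_Un)
    then show "subset_expect ?R p (\<lambda>B. of_bool (S \<subseteq> A \<union> B) * g (A \<union> B))
        = of_bool (A = S) * subset_expect ?R p g"
      by (simp add: subset_expect_cmult)
  qed
  also have "\<dots> = (\<Prod>e\<in>S. p e) * subset_expect ?R p g"
    using finS by (simp add: subset_expect_eq_subset_prob subset_prob_def)
  also have "subset_expect ?R p g = subset_expect S p (\<lambda>A. subset_expect ?R p (\<lambda>B. g (A \<union> B)))"
    using finS g_Un by (simp add: subset_expect_const cong: subset_expect_cong)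
  also have "\<dots> = subset_expect E p g"
    by (rule subset_expect_split[OF assms(1,2), symmetric])
  finally show ?thesis .
qed

lemma subset_expect_indicator:
  assumes "finite E" "S \<subseteq> E"
  shows "subset_expect E p (\<lambda>T. of_bool (S \<subseteq> T)) = (\<Prod>e\<in>S. p e)"
  using subset_expect_indep[OF assms, of "\<lambda>_. 1" p] assms by (simp add: subset_expect_const)

lemma two_point_chebyshev:
  fixes t a0 a1 b0 b1 :: real
  assumes "0 \<le> t" "t \<le> 1" "a0 \<le> a1" "b1 \<le> b0"
  shows "t * (a1 * b1) + (1 - t) * (a0 * b0) \<le> (t * a1 + (1 - t) * a0) * (t * b1 + (1 - t) * b0)"
proof -
  have "t * (1 - t) * ((a1 - a0) * (b1 - b0)) \<le> 0"
    using assms by (intro mult_nonneg_nonpos mult_nonneg_nonpos) auto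
  then show ?thesis by (simp add: algebra_simps)
qed

lemma harris_inequality:
  assumes "finite E" "\<And>e. e \<in> E \<Longrightarrow> 0 \<le> p e \<and> p e \<le> 1"
    and "\<And>S T. S \<subseteq> T \<Longrightarrow> T \<subseteq> E \<Longrightarrow> f S \<le> f T"
    and "\<And>S T. S \<subseteq> T \<Longrightarrow> T \<subseteq> E \<Longrightarrow> g T \<le> g S"
  shows "subset_expect E p (\<lambda>T. f T * g T) \<le> subset_expect E p f * subset_expect E p g"
  using assms
proof (induction E arbitrary: f g rule: finite_induct)
  case empty
  then show ?case by simp
next
  case (insert x F)
  let ?Ex = "\<lambda>h. subset_expect F p (\<lambda>T. h (insert x T))"
  have px: "0 \<le> p x" "p x \<le> 1" and pF: "\<And>e. e \<in> F \<Longrightarrow> 0 \<le> p e \<and> p e \<le> 1"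
    using insert.prems by auto
  have mono_x: "f (insert x S) \<le> f (insert x T)" "g (insert x T) \<le> g (insert x S)"
    if "S \<subseteq> T" "T \<subseteq> F" for S T
    using that insert.prems(2,3)[of "insert x S" "insert x T"] by auto
  have mono: "f S \<le> f T" "g T \<le> g S" if "S \<subseteq> T" "T \<subseteq> F" for S T
    using that insert.prems(2,3)[of S T] by auto
  have mono_insert: "f T \<le> f (insert x T)" "g (insert x T) \<le> g T" if "T \<subseteq> F" for T
    using that insert.prems(2,3)[of T "insert x T"] by auto
  have "subset_expect (insert x F) p (\<lambda>T. f T * g T)
      = p x * ?Ex (\<lambda>T. f T * g T) + (1 - p x) * subset_expect F p (\<lambda>T. f T * g T)"
    using insert.hyps by (simp add: subset_expect_insert subset_expect_add subset_expect_cmult)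
  also have "\<dots> \<le> p x * (?Ex f * ?Ex g) + (1 - p x) * (subset_expect F p f * subset_expect F p g)"
    using px pF mono_x mono insert.hyps by (intro add_mono mult_left_mono insert.IH) auto
  also have "\<dots> \<le> (p x * ?Ex f + (1 - p x) * subset_expect F p f) * (p x * ?Ex g + (1 - p x) * subset_expect F p g)"
    using px pF mono_insert by (intro two_point_chebyshev subset_expect_mono) auto
  also have "\<dots> = subset_expect (insert x F) p f * subset_expect (insert x F) p g"
    using insert.hyps by (simp add: subset_expect_insert subset_expect_add subset_expect_cmult)
  finally show ?case .
qed

section \<open>Janson's inequality\<close>

definition avoids :: "('i \<Rightarrow> 'a set) \<Rightarrow> 'i set \<Rightarrow> 'a set \<Rightarrow> real" where
  "avoids S I T = of_bool (\<forall>j\<in>I. \<not> S j \<subseteq> T)"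

definition janson_mu :: "('a \<Rightarrow> real) \<Rightarrow> ('i \<Rightarrow> 'a set) \<Rightarrow> 'i set \<Rightarrow> real" where
  "janson_mu p S I = (\<Sum>k\<in>I. \<Prod>e\<in>S k. p e)"

definition overlap_prob :: "('a \<Rightarrow> real) \<Rightarrow> ('i \<Rightarrow> 'a set) \<Rightarrow> 'i \<Rightarrow> 'i \<Rightarrow> real" where
  "overlap_prob p S k j = of_bool (S k \<inter> S j \<noteq> {}) * (\<Prod>e\<in>S k \<union> S j. p e)"

text \<open>Summed over ordered pairs, so this is twice the \<open>\<Delta>\<close> of Alon and Spencer.\<close>

definition janson_delta :: "('a \<Rightarrow> real) \<Rightarrow> ('i \<Rightarrow> 'a set) \<Rightarrow> 'i set \<Rightarrow> real" where
  "janson_delta p S I = (\<Sum>k\<in>I. \<Sum>j\<in>I. of_bool (j \<noteq> k) * overlap_prob p S k j)"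

definition janson_overlap :: "('a \<Rightarrow> real) \<Rightarrow> ('i \<Rightarrow> 'a set) \<Rightarrow> 'i set \<Rightarrow> real" where
  "janson_overlap p S I = (\<Sum>k\<in>I. \<Sum>j\<in>I. overlap_prob p S k j)"

lemma avoids_antimono: "T \<subseteq> T' \<Longrightarrow> avoids S I T' \<le> avoids S I T"
  unfolding avoids_def by auto

lemma overlap_prob_commute: "overlap_prob p S k j = overlap_prob p S j k"
  unfolding overlap_prob_def by (simp add: Int_commute Un_commute)

lemma overlap_prob_nonneg:
  "(\<And>e. e \<in> S k \<union> S j \<Longrightarrow> 0 \<le> p e) \<Longrightarrow> 0 \<le> overlap_prob p S k j"
  unfolding overlap_prob_def by (auto intro: prod_nonneg)

lemma subset_expect_contained_hit_le:
  assumes E: "finite E" and p: "\<And>e. e \<in> E \<Longrightarrow> 0 \<le> p e \<and> p e \<le> 1"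
    and I: "finite I" and S: "\<And>j. j \<in> insert i I \<Longrightarrow> S j \<subseteq> E"
  shows "subset_expect E p (\<lambda>T. of_bool (S i \<subseteq> T) * (1 - avoids S I T))
           \<le> (\<Sum>j\<in>I. \<Prod>e\<in>S i \<union> S j. p e)"
proof -
  have "subset_expect E p (\<lambda>T. of_bool (S i \<subseteq> T) * (1 - avoids S I T))
      \<le> subset_expect E p (\<lambda>T. \<Sum>j\<in>I. of_bool (S i \<union> S j \<subseteq> T))"
  proof (rule subset_expect_mono[OF p])
    fix T
    show "of_bool (S i \<subseteq> T) * (1 - avoids S I T) \<le> (\<Sum>j\<in>I. of_bool (S i \<union> S j \<subseteq> T))"
    proof (cases "S i \<subseteq> T \<and> (\<exists>j\<in>I. S j \<subseteq> T)")
      case True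
      then obtain j where "j \<in> I" "S i \<union> S j \<subseteq> T" by auto
      then have "of_bool (S i \<union> S j \<subseteq> T) \<le> (\<Sum>j\<in>I. of_bool (S i \<union> S j \<subseteq> T) :: real)"
        using I by (intro member_le_sum) auto
      then show ?thesis unfolding avoids_def using \<open>S i \<union> S j \<subseteq> T\<close> by simp
    next
      case False
      then show ?thesis unfolding avoids_def by (auto intro: sum_nonneg)
    qed
  qed
  also have "\<dots> = (\<Sum>j\<in>I. \<Prod>e\<in>S i \<union> S j. p e)"
    unfolding subset_expect_sum using S by (intro sum.cong refl subset_expect_indicator[OF E]) auto
  finally show ?thesis .
qed

text \<open>Harris' inequality does the work, after conditioning away the events that are
  independent of the event \<open>S i \<subseteq> T\<close>.\<close>

lemma subset_expect_contained_avoids_Un_ge: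
  assumes E: "finite E" and p: "\<And>e. e \<in> E \<Longrightarrow> 0 \<le> p e \<and> p e \<le> 1" and Si: "S i \<subseteq> E"
    and disj: "\<And>j. j \<in> I2 \<Longrightarrow> S i \<inter> S j = {}"
  shows "subset_expect E p (avoids S I2)
           * ((\<Prod>e\<in>S i. p e) - subset_expect E p (\<lambda>T. of_bool (S i \<subseteq> T) * (1 - avoids S I1 T)))
         \<le> subset_expect E p (\<lambda>T. of_bool (S i \<subseteq> T) * avoids S (I1 \<union> I2) T)"
proof -
  let ?b = "\<lambda>T. of_bool (S i \<subseteq> T) :: real"
  let ?Ex = "subset_expect E p"
  have "?b T * avoids S (I1 \<union> I2) T = ?b T * avoids S I2 T - ?b T * (1 - avoids S I1 T) * avoids S I2 T" for T
    unfolding avoids_def by auto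
  then have split: "?Ex (\<lambda>T. ?b T * avoids S (I1 \<union> I2) T)
      = ?Ex (\<lambda>T. ?b T * avoids S I2 T) - ?Ex (\<lambda>T. (?b T * (1 - avoids S I1 T)) * avoids S I2 T)"
    by (simp add: subset_expect_diff[symmetric])
  have indep: "?Ex (\<lambda>T. ?b T * avoids S I2 T) = (\<Prod>e\<in>S i. p e) * ?Ex (avoids S I2)"
  proof (rule subset_expect_indep[OF E Si])
    fix T
    have "\<forall>j\<in>I2. (S j \<subseteq> T) = (S j \<subseteq> T - S i)" using disj by auto
    then show "avoids S I2 T = avoids S I2 (T - S i)" unfolding avoids_def by auto
  qed
  have "?Ex (\<lambda>T. (?b T * (1 - avoids S I1 T)) * avoids S I2 T)
      \<le> ?Ex (\<lambda>T. ?b T * (1 - avoids S I1 T)) * ?Ex (avoids S I2)"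
  proof (rule harris_inequality[OF E p])
    fix A B assume "A \<subseteq> B" "B \<subseteq> E"
    then show "?b A * (1 - avoids S I1 A) \<le> ?b B * (1 - avoids S I1 B)"
      unfolding avoids_def by (auto; blast)
    show "avoids S I2 B \<le> avoids S I2 A" using \<open>A \<subseteq> B\<close> by (rule avoids_antimono)
  qed
  then show ?thesis
    using split indep by (simp add: algebra_simps)
qed

lemma subset_expect_contained_avoids_ge:
  assumes E: "finite E" and p: "\<And>e. e \<in> E \<Longrightarrow> 0 \<le> p e \<and> p e \<le> 1"
    and I: "finite I" and S: "\<And>j. j \<in> insert i I \<Longrightarrow> S j \<subseteq> E"
  shows "subset_expect E p (avoids S I) * ((\<Prod>e\<in>S i. p e) - (\<Sum>j\<in>I. overlap_prob p S i j))
           \<le> subset_expect E p (\<lambda>T. of_bool (S i \<subseteq> T) * avoids S I T)"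
proof -
  define I1 where "I1 = {j\<in>I. S i \<inter> S j \<noteq> {}}"
  define I2 where "I2 = I - I1"
  let ?Ex = "subset_expect E p"
  define X where "X = ?Ex (\<lambda>T. of_bool (S i \<subseteq> T) * (1 - avoids S I1 T))"
  have "X \<le> (\<Sum>j\<in>I1. \<Prod>e\<in>S i \<union> S j. p e)"
    unfolding X_def using I S by (intro subset_expect_contained_hit_le[OF E p]) (auto simp: I1_def)
  also have "\<dots> = (\<Sum>j\<in>I. overlap_prob p S i j)"
    unfolding I1_def overlap_prob_def using I by (simp add: sum.inter_filter Int_def)
  finally have X_overlap: "X \<le> (\<Sum>j\<in>I. overlap_prob p S i j)" .
  have "X \<le> ?Ex (\<lambda>T. of_bool (S i \<subseteq> T))"
    unfolding X_def by (rule subset_expect_mono[OF p]) (auto simp: avoids_def)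
  also have "\<dots> = (\<Prod>e\<in>S i. p e)" using S E by (simp add: subset_expect_indicator)
  finally have X_\<pi>: "X \<le> (\<Prod>e\<in>S i. p e)" .
  have "?Ex (avoids S I) * ((\<Prod>e\<in>S i. p e) - (\<Sum>j\<in>I. overlap_prob p S i j))
      \<le> ?Ex (avoids S I) * ((\<Prod>e\<in>S i. p e) - X)"
    using X_overlap by (intro mult_left_mono subset_expect_nonneg[OF p]) (auto simp: avoids_def)
  also have "\<dots> \<le> ?Ex (avoids S I2) * ((\<Prod>e\<in>S i. p e) - X)"
    using X_\<pi> by (intro mult_right_mono subset_expect_mono[OF p]) (auto simp: avoids_def I2_def)
  also have "\<dots> \<le> ?Ex (\<lambda>T. of_bool (S i \<subseteq> T) * avoids S (I1 \<union> I2) T)"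
    unfolding X_def using S by (intro subset_expect_contained_avoids_Un_ge[OF E p]) (auto simp: I1_def I2_def)
  also have "I1 \<union> I2 = I" by (auto simp: I1_def I2_def)
  finally show ?thesis .
qed

lemma subset_expect_avoids_insert_le:
  assumes E: "finite E" and p: "\<And>e. e \<in> E \<Longrightarrow> 0 \<le> p e \<and> p e \<le> 1"
    and I: "finite I" and S: "\<And>j. j \<in> insert i I \<Longrightarrow> S j \<subseteq> E"
  shows "subset_expect E p (avoids S (insert i I)) \<le>
           subset_expect E p (avoids S I) * (1 - (\<Prod>e\<in>S i. p e) + (\<Sum>j\<in>I. overlap_prob p S i j))"
proof -
  have "avoids S (insert i I) = (\<lambda>T. avoids S I T - of_bool (S i \<subseteq> T) * avoids S I T)"
    unfolding avoids_def by auto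
  then have "subset_expect E p (avoids S (insert i I))
      = subset_expect E p (avoids S I) - subset_expect E p (\<lambda>T. of_bool (S i \<subseteq> T) * avoids S I T)"
    by (simp add: subset_expect_diff[symmetric])
  moreover have "subset_expect E p (avoids S I) * ((\<Prod>e\<in>S i. p e) - (\<Sum>j\<in>I. overlap_prob p S i j))
      \<le> subset_expect E p (\<lambda>T. of_bool (S i \<subseteq> T) * avoids S I T)"
    by (rule subset_expect_contained_avoids_ge[OF E p I S])
  ultimately show ?thesis by (simp add: algebra_simps)
qed

lemma janson_mu_insert [simp]:
  "finite I \<Longrightarrow> i \<notin> I \<Longrightarrow> janson_mu p S (insert i I) = (\<Prod>e\<in>S i. p e) + janson_mu p S I"
  unfolding janson_mu_def by simp

lemma janson_delta_insert:
  assumes "finite I" "i \<notin> I"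
  shows "janson_delta p S (insert i I) = janson_delta p S I + 2 * (\<Sum>j\<in>I. overlap_prob p S i j)"
proof -
  have "janson_delta p S (insert i I) = (\<Sum>j\<in>I. overlap_prob p S i j)
      + (\<Sum>k\<in>I. overlap_prob p S k i + (\<Sum>j\<in>I. of_bool (j \<noteq> k) * overlap_prob p S k j))"
    using assms unfolding janson_delta_def
    by (simp del: sum_of_bool_mult_eq, intro arg_cong2[where f = "(+)"] sum.cong) auto
  then show ?thesis
    unfolding janson_delta_def by (simp add: sum.distrib overlap_prob_commute del: sum_of_bool_mult_eq)
qed

theorem janson_inequality:
  assumes E: "finite E" and p: "\<And>e. e \<in> E \<Longrightarrow> 0 \<le> p e \<and> p e \<le> 1"
    and I: "finite I" and S: "\<And>j. j \<in> I \<Longrightarrow> S j \<subseteq> E"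
  shows "subset_expect E p (avoids S I) \<le> exp (- janson_mu p S I + janson_delta p S I / 2)"
  using I S
proof (induction I rule: finite_induct)
  case empty
  then show ?case using E by (simp add: avoids_def subset_expect_const janson_mu_def janson_delta_def)
next
  case (insert i I)
  define \<pi> where "\<pi> = (\<Prod>e\<in>S i. p e)"
  define \<sigma> where "\<sigma> = (\<Sum>j\<in>I. overlap_prob p S i j)"
  have "subset_expect E p (avoids S (insert i I)) \<le> subset_expect E p (avoids S I) * (1 - \<pi> + \<sigma>)"
    unfolding \<pi>_def \<sigma>_def using insert by (intro subset_expect_avoids_insert_le[OF E p]) auto
  also have "\<dots> \<le> subset_expect E p (avoids S I) * exp (- \<pi> + \<sigma>)"
  proof (intro mult_left_mono subset_expect_nonneg[OF p])
    show "1 - \<pi> + \<sigma> \<le> exp (- \<pi> + \<sigma>)"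
      using exp_ge_add_one_self[of "- \<pi> + \<sigma>"] by linarith
  qed (auto simp: avoids_def)
  also have "\<dots> \<le> exp (- janson_mu p S I + janson_delta p S I / 2) * exp (- \<pi> + \<sigma>)"
    using insert.IH insert.prems by (intro mult_right_mono) simp_all
  also have "\<dots> = exp (- janson_mu p S (insert i I) + janson_delta p S (insert i I) / 2)"
    unfolding exp_add[symmetric] using insert.hyps by (simp add: janson_delta_insert \<pi>_def \<sigma>_def)
  finally show ?case .
qed

lemma exists_ge_subset_expect:
  assumes "finite E" "\<And>e. e \<in> E \<Longrightarrow> 0 \<le> p e \<and> p e \<le> 1"
  shows "\<exists>T\<subseteq>E. subset_expect E p h \<le> h T"
proof -
  have "Max (h ` Pow E) \<in> h ` Pow E" using assms(1) by (intro Max_in) auto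
  then obtain T where T: "T \<subseteq> E" "h T = Max (h ` Pow E)" by auto
  then have T_max: "h T' \<le> h T" if "T' \<subseteq> E" for T' using that assms(1) by simp
  have "subset_expect E p h \<le> subset_expect E p (\<lambda>_. h T)"
    using assms T_max by (intro subset_expect_mono) auto
  then show ?thesis using assms T(1) by (auto simp: subset_expect_const)
qed

lemma subset_expect_janson_mu:
  assumes "finite I"
  shows "subset_expect I (\<lambda>_. t) (janson_mu p S) = t * janson_mu p S I"
proof -
  have "subset_expect I (\<lambda>_. t) (janson_mu p S)
      = subset_expect I (\<lambda>_. t) (\<lambda>K. \<Sum>k\<in>I. (\<Prod>e\<in>S k. p e) * of_bool ({k} \<subseteq> K))"
    unfolding janson_mu_def using assms by (intro subset_expect_cong) (simp add: Int_absorb1 Int_absorb2)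
  also have "\<dots> = (\<Sum>k\<in>I. (\<Prod>e\<in>S k. p e) * t)"
    using assms by (simp only: subset_expect_sum subset_expect_cmult, intro sum.cong refl)
      (subst subset_expect_indicator[OF assms], auto)
  also have "\<dots> = t * janson_mu p S I"
    unfolding janson_mu_def by (simp add: sum_distrib_left mult.commute)
  finally show ?thesis .
qed

lemma subset_expect_janson_delta:
  assumes "finite I"
  shows "subset_expect I (\<lambda>_. t) (janson_delta p S) = t\<^sup>2 * janson_delta p S I"
proof -
  let ?ov = "\<lambda>k j. of_bool (j \<noteq> k) * overlap_prob p S k j"
  have "janson_delta p S K = (\<Sum>k\<in>I. \<Sum>j\<in>I. ?ov k j * of_bool ({k, j} \<subseteq> K))" if "K \<subseteq> I" for K
  proof -
    have "(\<Sum>j\<in>I. ?ov k j * of_bool ({k, j} \<subseteq> K)) = of_bool (k \<in> K) * (\<Sum>j\<in>K. ?ov k j)" for k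
      using assms that by (cases "k \<in> K") (simp_all add: Int_absorb1 Int_absorb2 del: of_bool_eq)
    then show ?thesis
      unfolding janson_delta_def using assms that by (simp add: Int_absorb1 Int_absorb2 del: of_bool_eq)
  qed
  then have "subset_expect I (\<lambda>_. t) (janson_delta p S)
      = (\<Sum>k\<in>I. \<Sum>j\<in>I. ?ov k j * (\<Prod>e\<in>{k, j}. t))"
    using assms by (simp only: subset_expect_sum subset_expect_cmult cong: subset_expect_cong,
        intro sum.cong refl) (subst subset_expect_indicator[OF assms], auto)
  also have "\<dots> = t\<^sup>2 * janson_delta p S I"
    unfolding janson_delta_def by (auto simp: sum_distrib_left power2_eq_square intro!: sum.cong)
  finally show ?thesis .
qed

text \<open>Apply the plain inequality to a random subfamily, keeping each event with probability
  \<open>t\<close>; a good choice of \<open>t\<close> controls the case of large \<open>\<Delta>\<close>.\<close>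

lemma janson_inequality_thinned:
  assumes E: "finite E" and p: "\<And>e. e \<in> E \<Longrightarrow> 0 \<le> p e \<and> p e \<le> 1"
    and I: "finite I" and S: "\<And>j. j \<in> I \<Longrightarrow> S j \<subseteq> E"
    and t: "0 \<le> t" "t \<le> 1"
  shows "subset_expect E p (avoids S I) \<le> exp (- (t * janson_mu p S I - t\<^sup>2 * janson_delta p S I / 2))"
proof -
  let ?h = "\<lambda>K. janson_mu p S K - janson_delta p S K / 2"
  have avg: "subset_expect I (\<lambda>_. t) ?h = t * janson_mu p S I - t\<^sup>2 * janson_delta p S I / 2"
    using I by (simp only: subset_expect_diff subset_expect_divide subset_expect_janson_mu
        subset_expect_janson_delta)
  obtain K where K: "K \<subseteq> I" "subset_expect I (\<lambda>_. t) ?h \<le> ?h K"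
    using exists_ge_subset_expect[OF I, of "\<lambda>_. t" ?h] t by auto
  have "subset_expect E p (avoids S I) \<le> subset_expect E p (avoids S K)"
    using K(1) by (intro subset_expect_mono[OF p]) (auto simp: avoids_def)
  also have "\<dots> \<le> exp (- janson_mu p S K + janson_delta p S K / 2)"
    using K(1) I S by (intro janson_inequality[OF E p]) (auto intro: finite_subset)
  also have "\<dots> \<le> exp (- (t * janson_mu p S I - t\<^sup>2 * janson_delta p S I / 2))"
    using K(2) avg by simp
  finally show ?thesis .
qed

lemma janson_delta_nonneg:
  assumes "\<And>e. e \<in> E \<Longrightarrow> 0 \<le> p e \<and> p e \<le> 1" "\<And>j. j \<in> I \<Longrightarrow> S j \<subseteq> E"
  shows "0 \<le> janson_delta p S I"
  unfolding janson_delta_def using assms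
  by (intro sum_nonneg mult_nonneg_nonneg overlap_prob_nonneg) force+

lemma janson_overlap_eq:
  assumes "finite I" "\<And>j. j \<in> I \<Longrightarrow> S j \<noteq> {}"
  shows "janson_overlap p S I = janson_mu p S I + janson_delta p S I"
proof -
  have "(\<Sum>j\<in>I. overlap_prob p S k j) = (\<Prod>e\<in>S k. p e) + (\<Sum>j\<in>I. of_bool (j \<noteq> k) * overlap_prob p S k j)"
    if "k \<in> I" for k
  proof -
    have "(\<Sum>j\<in>I. of_bool (j \<noteq> k) * overlap_prob p S k j) = (\<Sum>j\<in>I - {k}. overlap_prob p S k j)"
      using assms(1) by (simp, intro sum.cong) auto
    moreover have "overlap_prob p S k k = (\<Prod>e\<in>S k. p e)"
      using assms(2)[OF that] by (simp add: overlap_prob_def)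
    ultimately show ?thesis
      using assms(1) that by (simp add: sum.remove[of I k])
  qed
  then show ?thesis
    unfolding janson_overlap_def janson_mu_def janson_delta_def by (simp add: sum.distrib)
qed

lemma exists_thinning_param:
  fixes \<mu> d :: real
  assumes "0 < \<mu>" "0 \<le> d"
  obtains t where "0 \<le> t" "t \<le> 1" "\<mu>\<^sup>2 / (2 * (\<mu> + d)) \<le> t * \<mu> - t\<^sup>2 * d / 2"
proof (cases "d \<le> \<mu>")
  case True
  have "\<mu>\<^sup>2 \<le> (\<mu> - d / 2) * (2 * (\<mu> + d))"
  proof -
    have "d * d \<le> \<mu> * \<mu>" "0 \<le> \<mu> * d" using True assms by (auto intro: mult_mono)
    then show ?thesis by (simp add: algebra_simps power2_eq_square)
  qed
  then show ?thesis
    using assms by (intro that[of 1]) (simp_all add: pos_divide_le_eq)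
next
  case False
  have "\<mu>\<^sup>2 / (2 * (\<mu> + d)) \<le> \<mu>\<^sup>2 / (2 * d)"
    using False assms by (intro divide_left_mono) auto
  also have "\<dots> = (\<mu> / d) * \<mu> - (\<mu> / d)\<^sup>2 * d / 2"
    using False assms by (simp add: field_simps power2_eq_square)
  finally show ?thesis
    using False assms by (intro that[of "\<mu> / d"]) auto
qed

theorem janson_inequality_extended:
  assumes E: "finite E" and p: "\<And>e. e \<in> E \<Longrightarrow> 0 \<le> p e \<and> p e \<le> 1"
    and I: "finite I" and S: "\<And>j. j \<in> I \<Longrightarrow> S j \<subseteq> E" "\<And>j. j \<in> I \<Longrightarrow> S j \<noteq> {}"
    and mu: "0 < janson_mu p S I"
  shows "subset_expect E p (avoids S I) \<le> exp (- ((janson_mu p S I)\<^sup>2 / (2 * janson_overlap p S I)))"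
proof -
  obtain t where t: "0 \<le> t" "t \<le> 1" and
    "(janson_mu p S I)\<^sup>2 / (2 * (janson_mu p S I + janson_delta p S I))
       \<le> t * janson_mu p S I - t\<^sup>2 * janson_delta p S I / 2"
    using exists_thinning_param[OF mu janson_delta_nonneg[OF p S(1)]] .
  then have "- (t * janson_mu p S I - t\<^sup>2 * janson_delta p S I / 2)
      \<le> - ((janson_mu p S I)\<^sup>2 / (2 * janson_overlap p S I))"
    using janson_overlap_eq[OF I S(2)] by simp
  then show ?thesis
    using janson_inequality_thinned[OF E p I S(1) t] by (meson exp_le_cancel_iff order_trans)
qed

lemma finite_all_edges: "finite V \<Longrightarrow> finite (all_edges V)"
  unfolding all_edges_def by (rule finite_subset[of _ "Pow V"]) auto

lemma finite_graph: "G \<subseteq> all_edges {1..m} \<Longrightarrow> finite G"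
  using finite_all_edges[of "{1..m}"] by (auto intro: finite_subset)

lemma all_edges_subset_Pow: "all_edges V \<subseteq> Pow V"
  unfolding all_edges_def by auto

lemma pmf_gnp:
  assumes "0 \<le> p" "p \<le> 1" "X \<subseteq> all_edges {1..n}"
  shows "pmf (gnp n p) X = subset_prob (all_edges {1..n}) (\<lambda>_. p) X"
proof -
  define A where "A = all_edges {1..n}"
  define M where "M = Pi_pmf A False (\<lambda>_. bernoulli_pmf p)"
  define f where "f g = {e \<in> A. g e}" for g :: "nat set \<Rightarrow> bool"
  define gX where "gX e = (e \<in> X)" for e
  have finA: "finite A" unfolding A_def by (rule finite_all_edges) simp
  have "pmf (gnp n p) X = measure M (f -` {X})"
    unfolding gnp_def pmf_map A_def[symmetric] M_def f_def ..
  also have "\<dots> = measure M {gX}"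
  proof (rule measure_prob_cong_0)
    fix g assume "g \<in> f -` {X} - {gX}"
    then obtain e where "e \<notin> A" "g e"
      using assms(3) unfolding f_def gX_def A_def by (auto simp: fun_eq_iff)
    then show "pmf M g = 0" unfolding M_def using finA by (auto simp: pmf_Pi)
  qed (use assms(3) in \<open>auto simp: f_def gX_def A_def\<close>)
  also have "\<dots> = subset_prob A (\<lambda>_. p) X"
    using assms(1,2,3) finA unfolding M_def subset_prob_def gX_def A_def
    by (auto simp: measure_pmf_single pmf_Pi intro!: prod.cong)
  finally show ?thesis unfolding A_def .
qed

lemma set_pmf_gnp: "set_pmf (gnp n p) \<subseteq> Pow (all_edges {1..n})"
  unfolding gnp_def by auto

lemma measure_pmf_finite_support:
  assumes "set_pmf M \<subseteq> F" "finite F"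
  shows "measure_pmf.prob M A = sum (pmf M) (A \<inter> F)"
proof -
  have "measure_pmf.prob M A = measure_pmf.prob M (A \<inter> F)"
    using assms(1) by (intro measure_prob_cong_0) (auto simp: set_pmf_eq)
  also have "\<dots> = sum (pmf M) (A \<inter> F)" using assms(2) by (simp add: measure_measure_pmf_finite)
  finally show ?thesis .
qed

lemma bij_betw_vimage_Inl_Inr:
  "bij_betw (\<lambda>T. (Inl -` T, Inr -` T)) (Pow (A <+> B)) (Pow A \<times> Pow B)"
  by (rule bij_betw_byWitness[where f' = "\<lambda>(X, Y). X <+> Y"]) (auto simp: Plus_def)

lemma Plus_vimage_Inl_Inr [simp]: "Inl -` T <+> Inr -` T = T"
proof (rule set_eqI)
  fix x show "x \<in> Inl -` T <+> Inr -` T \<longleftrightarrow> x \<in> T" by (cases x) auto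
qed

lemma subset_prob_Plus:
  assumes "finite A" "finite B" "T \<subseteq> A <+> B"
  shows "subset_prob (A <+> B) (case_sum p q) T = subset_prob A p (Inl -` T) * subset_prob B q (Inr -` T)"
proof -
  have "subset_prob (A <+> B) (case_sum p q) T
      = (\<Prod>e\<in>Inl ` A. if e \<in> T then case_sum p q e else 1 - case_sum p q e)
        * (\<Prod>e\<in>Inr ` B. if e \<in> T then case_sum p q e else 1 - case_sum p q e)"
    unfolding subset_prob_def Plus_def using assms by (intro prod.union_disjoint) auto
  then show ?thesis
    unfolding subset_prob_def by (simp add: prod.reindex cong: if_cong)
qed

lemma subset_expect_Plus:
  assumes "finite A" "finite B"
  shows "subset_expect (A <+> B) (case_sum p q) (\<lambda>T. f (Inl -` T) (Inr -` T))
       = (\<Sum>(X, Y)\<in>Pow A \<times> Pow B. subset_prob A p X * subset_prob B q Y * f X Y)"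
  unfolding subset_expect_def
  using sum.reindex_bij_betw[OF bij_betw_vimage_Inl_Inr,
      of "\<lambda>(X, Y). subset_prob A p X * subset_prob B q Y * f X Y"]
  by (auto simp: subset_prob_Plus[OF assms] intro!: sum.cong)

text \<open>A pair of graphs on \<open>[n]\<close> is encoded as one subset of the disjoint union of two
  copies of the potential edges, so that two independent Erdos-Renyi graphs become
  a single product measure.\<close>

lemma prob_pair_gnp_eq_subset_expect:
  assumes "0 \<le> p1" "p1 \<le> 1" "0 \<le> p2" "p2 \<le> 1"
  shows "measure_pmf.prob (pair_pmf (gnp n p1) (gnp n p2)) {(X, Y). P X Y}
       = subset_expect (all_edges {1..n} <+> all_edges {1..n}) (case_sum (\<lambda>_. p1) (\<lambda>_. p2))
           (\<lambda>T. of_bool (P (Inl -` T) (Inr -` T)))"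
proof -
  define A where "A = all_edges {1..n}"
  have finA: "finite A" unfolding A_def by (rule finite_all_edges) simp
  have "measure_pmf.prob (pair_pmf (gnp n p1) (gnp n p2)) {(X, Y). P X Y}
      = sum (pmf (pair_pmf (gnp n p1) (gnp n p2))) ({(X, Y). P X Y} \<inter> (Pow A \<times> Pow A))"
    using set_pmf_gnp finA unfolding A_def by (intro measure_pmf_finite_support) auto
  also have "\<dots> = (\<Sum>(X, Y)\<in>Pow A \<times> Pow A. subset_prob A (\<lambda>_. p1) X * subset_prob A (\<lambda>_. p2) Y * of_bool (P X Y))"
    using finA assms unfolding A_def
    by (simp add: sum.inter_filter[symmetric] case_prod_beta Int_def conj_commute)
      (intro sum.cong refl, auto simp: pmf_pair pmf_gnp)
  also have "\<dots> = subset_expect (A <+> A) (case_sum (\<lambda>_. p1) (\<lambda>_. p2))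
      (\<lambda>T. of_bool (P (Inl -` T) (Inr -` T)))"
    by (rule subset_expect_Plus[OF finA finA, symmetric])
  finally show ?thesis unfolding A_def .
qed

section \<open>Configurations\<close>

definition injective_on_classes :: "nat \<Rightarrow> (nat \<times> nat \<Rightarrow> nat) \<Rightarrow> (nat \<Rightarrow> (nat \<times> nat) set) \<Rightarrow> bool" where
  "injective_on_classes m \<phi> C \<longleftrightarrow>
     (\<forall>i\<in>{1..m}. \<forall>j\<in>{1..m}. \<forall>a\<in>C i. \<forall>b\<in>C j. \<phi> a = \<phi> b \<longrightarrow> i = j \<and> a = b)"

definition required_edges :: "nat set set \<Rightarrow> nat set set \<Rightarrow> (nat \<Rightarrow> nat \<times> nat) \<Rightarrow> (nat set + nat set) set" where
  "required_edges G H c = image (fst \<circ> c) ` G <+> image (snd \<circ> c) ` H"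

text \<open>A choice of the sets \<open>V\<^sub>i\<close> and of \<open>\<sigma>\<close> is encoded by the classes
  \<open>C i = {(\<sigma>\<^sup>-\<^sup>1 y, y) | y \<in> V\<^sub>i}\<close>; only the injectivity of both projections
  is remembered, which suffices for the embedding and makes the classes easy to count.\<close>

definition configurations :: "nat \<Rightarrow> nat \<Rightarrow> (nat \<Rightarrow> nat) \<Rightarrow> (nat \<Rightarrow> (nat \<times> nat) set) set" where
  "configurations m n q =
     {C \<in> PiE {1..m} (\<lambda>i. {A. A \<subseteq> {1..n} \<times> {1..n} \<and> card A = q i}).
        injective_on_classes m fst C \<and> injective_on_classes m snd C}"

lemma injective_on_classesD:
  "injective_on_classes m \<phi> C \<Longrightarrow> i \<in> {1..m} \<Longrightarrow> j \<in> {1..m} \<Longrightarrow> a \<in> C i \<Longrightarrow> b \<in> C j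
    \<Longrightarrow> \<phi> a = \<phi> b \<Longrightarrow> i = j \<and> a = b"
  unfolding injective_on_classes_def by blast

lemma injective_on_classes_inj_on:
  assumes "injective_on_classes m \<phi> C" "c \<in> PiE {1..m} C"
  shows "inj_on (\<phi> \<circ> c) {1..m}"
  using assms by (auto intro!: inj_onI dest: injective_on_classesD simp: PiE_iff)

lemma injective_on_classes_inj_on_image:
  assumes "injective_on_classes m \<phi> C" "c \<in> PiE {1..m} C" "G \<subseteq> Pow {1..m}"
  shows "inj_on (image (\<phi> \<circ> c)) G"
  using inj_on_image_Pow[OF injective_on_classes_inj_on[OF assms(1,2)]] assms(3) by (rule inj_on_subset)

lemma injective_on_classes_image_Int:
  assumes "injective_on_classes m \<phi> C" "c \<in> PiE {1..m} C" "d \<in> PiE {1..m} C" "G \<subseteq> Pow {1..m}"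
  shows "image (\<phi> \<circ> c) ` G \<inter> image (\<phi> \<circ> d) ` G
       = image (\<phi> \<circ> c) ` induced_edges G {i\<in>{1..m}. c i = d i}"
proof (intro equalityI subsetI)
  fix x assume "x \<in> image (\<phi> \<circ> c) ` G \<inter> image (\<phi> \<circ> d) ` G"
  then obtain e e' where e: "e \<in> G" "e' \<in> G" "x = (\<phi> \<circ> c) ` e" "(\<phi> \<circ> c) ` e = (\<phi> \<circ> d) ` e'"
    by auto
  have "c i = d i" if "i \<in> e" for i
  proof -
    have "\<phi> (c i) \<in> (\<phi> \<circ> d) ` e'" using e(4) that by (metis comp_apply imageI)
    then obtain k where k: "k \<in> e'" "\<phi> (c i) = \<phi> (d k)" by auto
    have "e \<subseteq> {1..m}" "e' \<subseteq> {1..m}" using e(1,2) assms(4) by auto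
    then have "i \<in> {1..m}" "k \<in> {1..m}" using k(1) that by (meson subsetD)+
    moreover from this have "c i \<in> C i" "d k \<in> C k" using assms(2,3) by (auto simp: PiE_iff)
    ultimately show ?thesis using injective_on_classesD[OF assms(1) _ _ _ _ k(2)] by blast
  qed
  then show "x \<in> image (\<phi> \<circ> c) ` induced_edges G {i\<in>{1..m}. c i = d i}"
    using e assms(4) unfolding induced_edges_def by blast
next
  fix x assume "x \<in> image (\<phi> \<circ> c) ` induced_edges G {i\<in>{1..m}. c i = d i}"
  then obtain e where e: "e \<in> G" "e \<subseteq> {i\<in>{1..m}. c i = d i}" "x = (\<phi> \<circ> c) ` e"
    unfolding induced_edges_def by auto
  then have "x = (\<phi> \<circ> d) ` e" by (auto intro!: image_cong)
  then show "x \<in> image (\<phi> \<circ> c) ` G \<inter> image (\<phi> \<circ> d) ` G" using e by blast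
qed

lemma injective_on_classes_image_all_edges:
  assumes "injective_on_classes m \<phi> C" "c \<in> PiE {1..m} C" "G \<subseteq> all_edges {1..m}"
    and "\<And>i. i \<in> {1..m} \<Longrightarrow> \<phi> ` C i \<subseteq> {1..n}"
  shows "image (\<phi> \<circ> c) ` G \<subseteq> all_edges {1..n}"
proof
  fix x assume "x \<in> image (\<phi> \<circ> c) ` G"
  then obtain e where e: "e \<in> G" "x = (\<phi> \<circ> c) ` e" by auto
  have em: "e \<subseteq> {1..m}" "card e = 2" using e(1) assms(3) unfolding all_edges_def by auto
  have "card x = 2"
    using e em card_image[OF inj_on_subset[OF injective_on_classes_inj_on[OF assms(1,2)] em(1)]] by simp
  moreover have "x \<subseteq> {1..n}"
    using e(2) em(1) assms(2,4) by (force simp: PiE_iff)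
  ultimately show "x \<in> all_edges {1..n}" unfolding all_edges_def by auto
qed

lemma card_image_Un_image:
  assumes "injective_on_classes m \<phi> C" "c \<in> PiE {1..m} C" "d \<in> PiE {1..m} C"
    and "G \<subseteq> Pow {1..m}" "finite G"
  shows "card (image (\<phi> \<circ> c) ` G \<union> image (\<phi> \<circ> d) ` G)
           + card (induced_edges G {i\<in>{1..m}. c i = d i}) = 2 * card G"
proof -
  have inj: "inj_on (image (\<phi> \<circ> c)) G" "inj_on (image (\<phi> \<circ> d)) G"
    using injective_on_classes_inj_on_image assms(1-4) by blast+
  have "card (image (\<phi> \<circ> c) ` G \<inter> image (\<phi> \<circ> d) ` G)
      = card (induced_edges G {i\<in>{1..m}. c i = d i})"
    unfolding injective_on_classes_image_Int[OF assms(1-4)]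
    by (rule card_image, rule inj_on_subset[OF inj(1)]) (auto simp: induced_edges_def)
  moreover have "card (image (\<phi> \<circ> c) ` G) + card (image (\<phi> \<circ> d) ` G)
      = card (image (\<phi> \<circ> c) ` G \<union> image (\<phi> \<circ> d) ` G) + card (image (\<phi> \<circ> c) ` G \<inter> image (\<phi> \<circ> d) ` G)"
    using assms(5) by (intro card_Un_Int) auto
  ultimately show ?thesis
    using card_image[OF inj(1)] card_image[OF inj(2)] by linarith
qed

lemma prod_case_sum_Plus:
  fixes p1 p2 :: real
  assumes "finite X" "finite Y"
  shows "(\<Prod>e\<in>X <+> Y. case_sum (\<lambda>_. p1) (\<lambda>_. p2) e) = p1 ^ card X * p2 ^ card Y"
  unfolding Plus_def using assms by (subst prod.union_disjoint) (auto simp: prod.reindex card_image)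

lemma card_PiE_agree_on:
  assumes "finite M" "J \<subseteq> M" "c \<in> PiE M C" "\<And>i. i \<in> M \<Longrightarrow> finite (C i)"
  shows "card {d \<in> PiE M C. \<forall>j\<in>J. d j = c j} = (\<Prod>i\<in>M - J. card (C i))"
proof -
  have "{d \<in> PiE M C. \<forall>j\<in>J. d j = c j} = PiE M (\<lambda>i. if i \<in> J then {c i} else C i)"
    using assms(2,3) by (auto simp: PiE_iff extensional_def split: if_splits)
  then have "card {d \<in> PiE M C. \<forall>j\<in>J. d j = c j} = (\<Prod>i\<in>M. if i \<in> J then 1 else card (C i))"
    using assms(1) by (simp add: card_PiE if_distrib cong: if_cong)
  also have "\<dots> = (\<Prod>i\<in>M - J. card (C i))"
    using prod.subset_diff[OF assms(2,1), of "\<lambda>i. if i \<in> J then 1 else card (C i)"] by simp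
  finally show ?thesis .
qed

text \<open>Each index set \<open>J\<close> accounts for the choices agreeing with \<open>c\<close> on \<open>J\<close>, whose
  number cancels \<open>\<Prod>\<^sub>j\<^sub>\<in>\<^sub>J q\<^sub>j\<close>.\<close>

lemma sum_prod_agreement_le:
  assumes c: "c \<in> PiE {1..m} C" and C: "\<And>i. i \<in> {1..m} \<Longrightarrow> finite (C i) \<and> card (C i) = q i"
  shows "(\<Sum>d\<in>PiE {1..m} C. \<Prod>j\<in>{i\<in>{1..m}. c i = d i}. real (q j))
           \<le> 2 ^ m * (\<Prod>i\<in>{1..m}. real (q i))"
proof -
  let ?I = "PiE {1..m} C"
  have finI: "finite ?I" using C by (intro finite_PiE) auto
  have "(\<Sum>d\<in>?I. \<Prod>j\<in>{i\<in>{1..m}. c i = d i}. real (q j))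
      \<le> (\<Sum>d\<in>?I. \<Sum>J\<in>Pow {1..m}. of_bool (\<forall>j\<in>J. d j = c j) * (\<Prod>j\<in>J. real (q j)))"
  proof (intro sum_mono)
    fix d
    let ?J = "{i\<in>{1..m}. c i = d i}"
    have "(\<Prod>j\<in>?J. real (q j)) = of_bool (\<forall>j\<in>?J. d j = c j) * (\<Prod>j\<in>?J. real (q j))"
      by simp
    also have "\<dots> \<le> (\<Sum>J\<in>Pow {1..m}. of_bool (\<forall>j\<in>J. d j = c j) * (\<Prod>j\<in>J. real (q j)))"
      by (rule member_le_sum) (auto simp: prod_nonneg)
    finally show "(\<Prod>j\<in>?J. real (q j))
        \<le> (\<Sum>J\<in>Pow {1..m}. of_bool (\<forall>j\<in>J. d j = c j) * (\<Prod>j\<in>J. real (q j)))" .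
  qed
  also have "\<dots> = (\<Sum>J\<in>Pow {1..m}. (\<Sum>d\<in>?I. of_bool (\<forall>j\<in>J. d j = c j)) * (\<Prod>j\<in>J. real (q j)))"
    by (simp only: sum.swap[of _ ?I] sum_distrib_right)
  also have "\<dots> = (\<Sum>J\<in>Pow {1..m}. \<Prod>i\<in>{1..m}. real (q i))"
  proof (intro sum.cong refl)
    fix J assume J: "J \<in> Pow {1..m}"
    have "(\<Sum>d\<in>?I. of_bool (\<forall>j\<in>J. d j = c j)) = real (card {d\<in>?I. \<forall>j\<in>J. d j = c j})"
      using finI by (simp add: Int_def)
    also have "card {d\<in>?I. \<forall>j\<in>J. d j = c j} = (\<Prod>i\<in>{1..m} - J. q i)"
      using J card_PiE_agree_on[of "{1..m}" J c C] c C by simp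
    finally show "(\<Sum>d\<in>?I. of_bool (\<forall>j\<in>J. d j = c j)) * (\<Prod>j\<in>J. real (q j)) = (\<Prod>i\<in>{1..m}. real (q i))"
      using J prod.subset_diff[of J "{1..m}" "\<lambda>i. real (q i)"] by auto
  qed
  also have "\<dots> = 2 ^ m * (\<Prod>i\<in>{1..m}. real (q i))"
    by (simp add: card_Pow)
  finally show ?thesis .
qed

section \<open>The failure probability of one configuration\<close>

text \<open>\<open>p\<^sub>1\<^bsup>e(G|\<^sub>J)\<^esup> p\<^sub>2\<^bsup>e(H|\<^sub>J)\<^esup> \<Prod>\<^sub>j\<^sub>\<in>\<^sub>J q\<^sub>j\<close> is the expected number of embeddings of
  \<open>(G|\<^sub>J, H|\<^sub>J)\<close> with \<open>v\<^sub>j \<in> V\<^sub>j\<close>.\<close>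

definition subgraph_expectations_ge ::
    "nat \<Rightarrow> (nat \<Rightarrow> nat) \<Rightarrow> nat set set \<Rightarrow> nat set set \<Rightarrow> real \<Rightarrow> real \<Rightarrow> real \<Rightarrow> bool" where
  "subgraph_expectations_ge m q G H p1 p2 K \<longleftrightarrow>
     (\<forall>J. J \<subseteq> {1..m} \<longrightarrow> card (induced_edges G J) + card (induced_edges H J) \<ge> 1 \<longrightarrow>
        p1 ^ card (induced_edges G J) * p2 ^ card (induced_edges H J) * (\<Prod>j\<in>J. real (q j)) \<ge> K)"

lemma subgraph_expectations_geD:
  "subgraph_expectations_ge m q G H p1 p2 K \<Longrightarrow> J \<subseteq> {1..m}
    \<Longrightarrow> card (induced_edges G J) + card (induced_edges H J) \<ge> 1
    \<Longrightarrow> K \<le> p1 ^ card (induced_edges G J) * p2 ^ card (induced_edges H J) * (\<Prod>j\<in>J. real (q j))"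
  unfolding subgraph_expectations_ge_def by blast

lemma configurationsD:
  assumes "C \<in> configurations m n q"
  shows "injective_on_classes m fst C" "injective_on_classes m snd C"
    and "\<And>i. i \<in> {1..m} \<Longrightarrow> C i \<subseteq> {1..n} \<times> {1..n}"
    and "\<And>i. i \<in> {1..m} \<Longrightarrow> finite (C i) \<and> card (C i) = q i"
proof -
  show "injective_on_classes m fst C" "injective_on_classes m snd C"
    and sub: "\<And>i. i \<in> {1..m} \<Longrightarrow> C i \<subseteq> {1..n} \<times> {1..n}"
    using assms unfolding configurations_def by (auto simp: PiE_iff)
  show "\<And>i. i \<in> {1..m} \<Longrightarrow> finite (C i) \<and> card (C i) = q i"
    using assms finite_subset[OF sub] unfolding configurations_def by (auto simp: PiE_iff)
qed

lemma required_edges_subset: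
  assumes C: "C \<in> configurations m n q" and c: "c \<in> PiE {1..m} C"
    and G: "G \<subseteq> all_edges {1..m}" and H: "H \<subseteq> all_edges {1..m}"
  shows "required_edges G H c \<subseteq> all_edges {1..n} <+> all_edges {1..n}"
proof -
  have fst: "fst ` C i \<subseteq> {1..n}" and snd: "snd ` C i \<subseteq> {1..n}" if "i \<in> {1..m}" for i
    using configurationsD(3)[OF C that] by auto
  have "image (fst \<circ> c) ` G \<subseteq> all_edges {1..n}"
    by (rule injective_on_classes_image_all_edges[OF configurationsD(1)[OF C] c G fst])
  moreover have "image (snd \<circ> c) ` H \<subseteq> all_edges {1..n}"
    by (rule injective_on_classes_image_all_edges[OF configurationsD(2)[OF C] c H snd])
  ultimately show ?thesis
    unfolding required_edges_def Plus_def by blast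
qed

lemma prod_required_edges:
  fixes p1 p2 :: real
  assumes C: "C \<in> configurations m n q" and c: "c \<in> PiE {1..m} C"
    and G: "G \<subseteq> all_edges {1..m}" and H: "H \<subseteq> all_edges {1..m}"
  shows "(\<Prod>e\<in>required_edges G H c. case_sum (\<lambda>_. p1) (\<lambda>_. p2) e) = p1 ^ card G * p2 ^ card H"
proof -
  have "card (image (fst \<circ> c) ` G) = card G"
    by (rule card_image[OF injective_on_classes_inj_on_image[OF configurationsD(1)[OF C] c
          order.trans[OF G all_edges_subset_Pow]]])
  moreover have "card (image (snd \<circ> c) ` H) = card H"
    by (rule card_image[OF injective_on_classes_inj_on_image[OF configurationsD(2)[OF C] c
          order.trans[OF H all_edges_subset_Pow]]])
  ultimately show ?thesis
    unfolding required_edges_def using finite_graph[OF G] finite_graph[OF H] by (simp add: prod_case_sum_Plus)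
qed

lemma required_edges_overlap_induced_edges:
  assumes C: "C \<in> configurations m n q" and c: "c \<in> PiE {1..m} C" and d: "d \<in> PiE {1..m} C"
    and G: "G \<subseteq> all_edges {1..m}" and H: "H \<subseteq> all_edges {1..m}"
    and overlap: "required_edges G H c \<inter> required_edges G H d \<noteq> {}"
  shows "card (induced_edges G {i\<in>{1..m}. c i = d i}) + card (induced_edges H {i\<in>{1..m}. c i = d i}) \<ge> 1"
proof -
  have GP: "G \<subseteq> Pow {1..m}" and HP: "H \<subseteq> Pow {1..m}"
    using G H all_edges_subset_Pow by blast+
  have "image (fst \<circ> c) ` G \<inter> image (fst \<circ> d) ` G \<noteq> {} \<or> image (snd \<circ> c) ` H \<inter> image (snd \<circ> d) ` H \<noteq> {}"
    using overlap unfolding required_edges_def Plus_def by blast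
  then show ?thesis
    unfolding injective_on_classes_image_Int[OF configurationsD(1)[OF C] c d GP]
      injective_on_classes_image_Int[OF configurationsD(2)[OF C] c d HP]
    using finite_graph[OF G] finite_graph[OF H] by (auto simp: induced_edges_def card_gt_0_iff Suc_le_eq)
qed

lemma prod_required_edges_Un:
  fixes p1 p2 :: real
  assumes C: "C \<in> configurations m n q" and c: "c \<in> PiE {1..m} C" and d: "d \<in> PiE {1..m} C"
    and G: "G \<subseteq> all_edges {1..m}" and H: "H \<subseteq> all_edges {1..m}"
  shows "(\<Prod>e\<in>required_edges G H c \<union> required_edges G H d. case_sum (\<lambda>_. p1) (\<lambda>_. p2) e)
           * (p1 ^ card (induced_edges G {i\<in>{1..m}. c i = d i})
              * p2 ^ card (induced_edges H {i\<in>{1..m}. c i = d i}))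
         = (p1 ^ card G * p2 ^ card H)\<^sup>2"
proof -
  let ?J = "{i\<in>{1..m}. c i = d i}"
  let ?X = "image (fst \<circ> c) ` G \<union> image (fst \<circ> d) ` G"
  let ?Y = "image (snd \<circ> c) ` H \<union> image (snd \<circ> d) ` H"
  have GP: "G \<subseteq> Pow {1..m}" and HP: "H \<subseteq> Pow {1..m}"
    using G H all_edges_subset_Pow by blast+
  have "required_edges G H c \<union> required_edges G H d = ?X <+> ?Y"
    unfolding required_edges_def Plus_def by auto
  then have "(\<Prod>e\<in>required_edges G H c \<union> required_edges G H d. case_sum (\<lambda>_. p1) (\<lambda>_. p2) e)
      = p1 ^ card ?X * p2 ^ card ?Y"
    using finite_graph[OF G] finite_graph[OF H] by (simp add: prod_case_sum_Plus)
  moreover have "(p1 ^ card G * p2 ^ card H)\<^sup>2 = p1 ^ (2 * card G) * p2 ^ (2 * card H)"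
    by (simp add: power_mult_distrib power_mult[symmetric] mult.commute)
  moreover have "2 * card G = card ?X + card (induced_edges G ?J)" "2 * card H = card ?Y + card (induced_edges H ?J)"
    using card_image_Un_image[OF configurationsD(1)[OF C] c d GP finite_graph[OF G]]
      card_image_Un_image[OF configurationsD(2)[OF C] c d HP finite_graph[OF H]] by simp_all
  ultimately show ?thesis by (simp add: power_add)
qed

lemma overlap_prob_required_edges_le:
  fixes p1 p2 K :: real
  assumes C: "C \<in> configurations m n q" and c: "c \<in> PiE {1..m} C" and d: "d \<in> PiE {1..m} C"
    and G: "G \<subseteq> all_edges {1..m}" and H: "H \<subseteq> all_edges {1..m}" and p: "0 \<le> p1" "0 \<le> p2"
    and K: "subgraph_expectations_ge m q G H p1 p2 K"
  shows "overlap_prob (case_sum (\<lambda>_. p1) (\<lambda>_. p2)) (required_edges G H) c d * K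
           \<le> (p1 ^ card G * p2 ^ card H)\<^sup>2 * (\<Prod>j\<in>{i\<in>{1..m}. c i = d i}. real (q j))"
proof (cases "required_edges G H c \<inter> required_edges G H d = {}")
  case True
  then show ?thesis by (simp add: overlap_prob_def prod_nonneg)
next
  case False
  define J where "J = {i\<in>{1..m}. c i = d i}"
  let ?P = "\<Prod>e\<in>required_edges G H c \<union> required_edges G H d. case_sum (\<lambda>_. p1) (\<lambda>_. p2) e"
  have KJ: "K \<le> p1 ^ card (induced_edges G J) * p2 ^ card (induced_edges H J) * (\<Prod>j\<in>J. real (q j))"
    using required_edges_overlap_induced_edges[OF C c d G H False]
    by (intro subgraph_expectations_geD[OF K]) (auto simp: J_def)
  have "overlap_prob (case_sum (\<lambda>_. p1) (\<lambda>_. p2)) (required_edges G H) c d * K = ?P * K"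
    using False by (simp add: overlap_prob_def)
  also have "\<dots> \<le> ?P * (p1 ^ card (induced_edges G J) * p2 ^ card (induced_edges H J) * (\<Prod>j\<in>J. real (q j)))"
    using p KJ by (intro mult_left_mono prod_nonneg) (simp_all split: sum.split)
  also have "\<dots> = (p1 ^ card G * p2 ^ card H)\<^sup>2 * (\<Prod>j\<in>J. real (q j))"
    using prod_required_edges_Un[OF C c d G H, of p1 p2] unfolding J_def by (simp add: mult_ac)
  finally show ?thesis unfolding J_def .
qed

lemma janson_mu_required_edges:
  fixes p1 p2 :: real
  assumes C: "C \<in> configurations m n q" and G: "G \<subseteq> all_edges {1..m}" and H: "H \<subseteq> all_edges {1..m}"
  shows "janson_mu (case_sum (\<lambda>_. p1) (\<lambda>_. p2)) (required_edges G H) (PiE {1..m} C)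
           = (\<Prod>i\<in>{1..m}. real (q i)) * (p1 ^ card G * p2 ^ card H)"
proof -
  have "card (PiE {1..m} C) = (\<Prod>i\<in>{1..m}. q i)"
    using configurationsD(4)[OF C] by (simp add: card_PiE)
  then show ?thesis
    unfolding janson_mu_def using prod_required_edges[OF C _ G H] by simp
qed

lemma janson_overlap_required_edges_le:
  fixes p1 p2 K :: real
  assumes C: "C \<in> configurations m n q" and G: "G \<subseteq> all_edges {1..m}" and H: "H \<subseteq> all_edges {1..m}"
    and p: "0 \<le> p1" "0 \<le> p2" and K: "subgraph_expectations_ge m q G H p1 p2 K"
  shows "janson_overlap (case_sum (\<lambda>_. p1) (\<lambda>_. p2)) (required_edges G H) (PiE {1..m} C) * K
           \<le> 2 ^ m * (janson_mu (case_sum (\<lambda>_. p1) (\<lambda>_. p2)) (required_edges G H) (PiE {1..m} C))\<^sup>2"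
proof -
  let ?I = "PiE {1..m} C"
  let ?\<rho> = "p1 ^ card G * p2 ^ card H"
  let ?Q = "\<Prod>i\<in>{1..m}. real (q i)"
  have "janson_overlap (case_sum (\<lambda>_. p1) (\<lambda>_. p2)) (required_edges G H) ?I * K
      = (\<Sum>c\<in>?I. \<Sum>d\<in>?I. overlap_prob (case_sum (\<lambda>_. p1) (\<lambda>_. p2)) (required_edges G H) c d * K)"
    unfolding janson_overlap_def by (simp add: sum_distrib_right)
  also have "\<dots> \<le> (\<Sum>c\<in>?I. ?\<rho>\<^sup>2 * (\<Sum>d\<in>?I. \<Prod>j\<in>{i\<in>{1..m}. c i = d i}. real (q j)))"
    unfolding sum_distrib_left
    by (intro sum_mono overlap_prob_required_edges_le[OF C _ _ G H p K])
  also have "\<dots> \<le> (\<Sum>c\<in>?I. ?\<rho>\<^sup>2 * (2 ^ m * ?Q))"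
    using configurationsD(4)[OF C] by (intro sum_mono mult_left_mono sum_prod_agreement_le) auto
  also have "\<dots> = 2 ^ m * (?Q * ?\<rho>)\<^sup>2"
    using configurationsD(4)[OF C] by (simp add: card_PiE power2_eq_square)
  finally show ?thesis
    by (simp only: janson_mu_required_edges[OF C G H])
qed

lemma configuration_avoided_prob_le:
  fixes p1 p2 K :: real
  assumes C: "C \<in> configurations m n q" and G: "G \<subseteq> all_edges {1..m}" and H: "H \<subseteq> all_edges {1..m}"
    and p: "0 \<le> p1" "p1 \<le> 1" "0 \<le> p2" "p2 \<le> 1" and edges: "card G + card H \<ge> 1"
    and K: "0 < K" "subgraph_expectations_ge m q G H p1 p2 K"
  shows "subset_expect (all_edges {1..n} <+> all_edges {1..n}) (case_sum (\<lambda>_. p1) (\<lambda>_. p2))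
           (avoids (required_edges G H) (PiE {1..m} C)) \<le> exp (- (K / (2 * 2 ^ m)))"
proof -
  let ?p = "case_sum (\<lambda>_. p1) (\<lambda>_. p2)" and ?I = "PiE {1..m} C"
  let ?\<mu> = "janson_mu ?p (required_edges G H) ?I" and ?D = "janson_overlap ?p (required_edges G H) ?I"
  have "induced_edges G {1..m} = G" "induced_edges H {1..m} = H"
    using G H unfolding induced_edges_def all_edges_def by auto
  then have "K \<le> p1 ^ card G * p2 ^ card H * (\<Prod>i\<in>{1..m}. real (q i))"
    using subgraph_expectations_geD[OF K(2), of "{1..m}"] edges by simp
  then have \<mu>: "0 < ?\<mu>"
    using K(1) unfolding janson_mu_required_edges[OF C G H] by (simp add: mult.commute)
  have S: "required_edges G H c \<subseteq> all_edges {1..n} <+> all_edges {1..n}" "required_edges G H c \<noteq> {}"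
    if "c \<in> ?I" for c
    using required_edges_subset[OF C that G H] edges by (auto simp: required_edges_def)
  have p': "\<And>e. 0 \<le> ?p e \<and> ?p e \<le> 1" using p by (simp split: sum.split)
  have I: "finite ?I" using configurationsD(4)[OF C] by (intro finite_PiE) auto
  have "0 \<le> janson_delta ?p (required_edges G H) ?I"
    using p' S by (intro janson_delta_nonneg[of "all_edges {1..n} <+> all_edges {1..n}"]) auto
  then have D: "0 < ?D"
    using janson_overlap_eq[OF I, of "required_edges G H" ?p] S \<mu> by simp
  have "subset_expect (all_edges {1..n} <+> all_edges {1..n}) ?p (avoids (required_edges G H) ?I)
      \<le> exp (- (?\<mu>\<^sup>2 / (2 * ?D)))"
    using p' S \<mu> I finite_all_edges by (intro janson_inequality_extended) auto
  also have "\<dots> \<le> exp (- (K / (2 * 2 ^ m)))"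
  proof -
    have "?D * K \<le> 2 ^ m * ?\<mu>\<^sup>2" by (rule janson_overlap_required_edges_le[OF C G H p(1,3) K(2)])
    with D show ?thesis using K(1) by (simp add: field_simps)
  qed
  finally show ?thesis .
qed

lemma injective_on_classes_image:
  assumes "inj_on (\<phi> \<circ> g) (\<Union>i\<in>{1..m}. V i)"
    and "\<forall>i\<in>{1..m}. \<forall>j\<in>{1..m}. i \<noteq> j \<longrightarrow> V i \<inter> V j = {}"
  shows "injective_on_classes m \<phi> (restrict (\<lambda>i. g ` V i) {1..m})"
  unfolding injective_on_classes_def
proof (intro ballI impI)
  fix i j a b assume ij: "i \<in> {1..m}" "j \<in> {1..m}"
    and ab: "a \<in> restrict (\<lambda>i. g ` V i) {1..m} i" "b \<in> restrict (\<lambda>i. g ` V i) {1..m} j" "\<phi> a = \<phi> b"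
  then obtain y y' where y: "y \<in> V i" "y' \<in> V j" "a = g y" "b = g y'" by auto
  then have "y = y'" using ab(3) ij inj_onD[OF assms(1)] by (metis UN_I comp_apply)
  then show "i = j \<and> a = b" using assms(2) ij y by blast
qed

lemma choice_configuration:
  assumes V: "\<forall>i\<in>{1..m}. V i \<subseteq> {1..n} \<and> card (V i) = q i"
    and disj: "\<forall>i\<in>{1..m}. \<forall>j\<in>{1..m}. i \<noteq> j \<longrightarrow> V i \<inter> V j = {}"
    and \<sigma>: "bij_betw \<sigma> {1..n} {1..n}"
  shows "restrict (\<lambda>i. (\<lambda>y. (inv_into {1..n} \<sigma> y, y)) ` V i) {1..m} \<in> configurations m n q"
proof -
  let ?\<tau> = "inv_into {1..n} \<sigma>"
  have \<tau>: "bij_betw ?\<tau> {1..n} {1..n}" by (rule bij_betw_inv_into[OF \<sigma>])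
  have V_sub: "(\<Union>i\<in>{1..m}. V i) \<subseteq> {1..n}" using V by auto
  have "(\<lambda>y. (?\<tau> y, y)) ` V i \<subseteq> {1..n} \<times> {1..n}" "card ((\<lambda>y. (?\<tau> y, y)) ` V i) = q i"
    if "i \<in> {1..m}" for i
  proof -
    have Vi: "V i \<subseteq> {1..n}" "card (V i) = q i" using that V by auto
    moreover have "?\<tau> ` {1..n} \<subseteq> {1..n}" using \<tau> by (simp add: bij_betw_def)
    ultimately show "(\<lambda>y. (?\<tau> y, y)) ` V i \<subseteq> {1..n} \<times> {1..n}" by blast
    show "card ((\<lambda>y. (?\<tau> y, y)) ` V i) = q i" using Vi(2) by (simp add: card_image inj_on_def)
  qed
  moreover have "injective_on_classes m fst (restrict (\<lambda>i. (\<lambda>y. (?\<tau> y, y)) ` V i) {1..m})"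
    using inj_on_subset[OF bij_betw_imp_inj_on[OF \<tau>] V_sub] disj
    by (intro injective_on_classes_image) (simp_all add: comp_def)
  moreover have "injective_on_classes m snd (restrict (\<lambda>i. (\<lambda>y. (?\<tau> y, y)) ` V i) {1..m})"
    using disj by (intro injective_on_classes_image) (simp_all add: comp_def)
  ultimately show ?thesis
    unfolding configurations_def by (simp add: restrict_PiE_iff)
qed

lemma embeddable_wrt_if_required_edges:
  assumes c: "c \<in> PiE {1..m} (restrict (\<lambda>i. (\<lambda>y. (inv_into {1..n} \<sigma> y, y)) ` V i) {1..m})"
    and sub: "required_edges G H c \<subseteq> X <+> Y"
  shows "embeddable_wrt m n G H X Y V \<sigma>"
  unfolding embeddable_wrt_def
proof (intro exI[of _ "snd \<circ> c"] conjI ballI impI)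
  have c_eq: "fst (c i) = inv_into {1..n} \<sigma> (snd (c i)) \<and> snd (c i) \<in> V i" if "i \<in> {1..m}" for i
  proof -
    have "c i \<in> (\<lambda>y. (inv_into {1..n} \<sigma> y, y)) ` V i" using PiE_mem[OF c that] that by simp
    then show ?thesis by force
  qed
  fix i assume i: "i \<in> {1..m}"
  then show "(snd \<circ> c) i \<in> V i" using c_eq by simp
  fix j assume j: "j \<in> {1..m}"
  have "Inr (image (snd \<circ> c) {i, j}) \<in> required_edges G H c" if "{i, j} \<in> H"
    using that unfolding required_edges_def by blast
  then show "{(snd \<circ> c) i, (snd \<circ> c) j} \<in> Y" if "{i, j} \<in> H"
    using sub that by auto
  have "Inl (image (fst \<circ> c) {i, j}) \<in> required_edges G H c" if "{i, j} \<in> G"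
    using that unfolding required_edges_def by blast
  then have "image (fst \<circ> c) {i, j} \<in> X" if "{i, j} \<in> G"
    using sub that by auto
  then show "{inv_into {1..n} \<sigma> ((snd \<circ> c) i), inv_into {1..n} \<sigma> ((snd \<circ> c) j)} \<in> X" if "{i, j} \<in> G"
    using that c_eq[OF i] c_eq[OF j] by simp
qed

lemma not_q_embeddable_imp_avoided_configuration:
  assumes "\<not> q_embeddable m n q G H X Y"
  obtains C where "C \<in> configurations m n q" "avoids (required_edges G H) (PiE {1..m} C) (X <+> Y) = 1"
proof -
  obtain V \<sigma> where V: "\<forall>i\<in>{1..m}. V i \<subseteq> {1..n} \<and> card (V i) = q i"
    and disj: "\<forall>i\<in>{1..m}. \<forall>j\<in>{1..m}. i \<noteq> j \<longrightarrow> V i \<inter> V j = {}"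
    and \<sigma>: "bij_betw \<sigma> {1..n} {1..n}" and not_emb: "\<not> embeddable_wrt m n G H X Y V \<sigma>"
    using assms unfolding q_embeddable_def by blast
  let ?C = "restrict (\<lambda>i. (\<lambda>y. (inv_into {1..n} \<sigma> y, y)) ` V i) {1..m}"
  have "\<not> required_edges G H c \<subseteq> X <+> Y" if "c \<in> PiE {1..m} ?C" for c
    using embeddable_wrt_if_required_edges[OF that] not_emb by blast
  then have "avoids (required_edges G H) (PiE {1..m} ?C) (X <+> Y) = 1"
    unfolding avoids_def by simp
  then show ?thesis using that[OF choice_configuration[OF V disj \<sigma>]] by simp
qed

lemma card_configurations_le:
  "finite (configurations m n q) \<and> card (configurations m n q) \<le> n ^ (2 * (\<Sum>i\<in>{1..m}. q i))"
proof -
  let ?P = "PiE {1..m} (\<lambda>i. {A. A \<subseteq> {1..n} \<times> {1..n} \<and> card A = q i})"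
  have finP: "finite ?P" by (intro finite_PiE) auto
  have sub: "configurations m n q \<subseteq> ?P" unfolding configurations_def by auto
  have "card (configurations m n q) \<le> card ?P" using finP sub by (rule card_mono)
  also have "\<dots> = (\<Prod>i\<in>{1..m}. (n * n) choose q i)"
    by (simp add: card_PiE n_subsets)
  also have "\<dots> \<le> (\<Prod>i\<in>{1..m}. (n * n) ^ q i)"
    using binomial_fact_pow order_trans[OF _ binomial_fact_pow] by (intro prod_mono) simp
  also have "\<dots> = n ^ (2 * (\<Sum>i\<in>{1..m}. q i))"
    by (simp add: power_sum power_mult power2_eq_square)
  finally show ?thesis using finite_subset[OF sub finP] by simp
qed

lemma q_embeddable_edgeless:
  assumes "\<forall>i\<in>{1..m}. q i \<ge> 1"
  shows "q_embeddable m n q {} {} X Y"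
  unfolding q_embeddable_def embeddable_wrt_def
proof (intro allI impI exI[of _ "\<lambda>i. SOME y. y \<in> V i" for V])
  fix V :: "nat \<Rightarrow> nat set" and \<sigma> :: "nat \<Rightarrow> nat"
  assume "(\<forall>i\<in>{1..m}. V i \<subseteq> {1..n} \<and> card (V i) = q i) \<and>
         (\<forall>i\<in>{1..m}. \<forall>j\<in>{1..m}. i \<noteq> j \<longrightarrow> V i \<inter> V j = {}) \<and> bij_betw \<sigma> {1..n} {1..n}"
  then have "V i \<noteq> {}" if "i \<in> {1..m}" for i
    using assms that by fastforce
  then show "(\<forall>i\<in>{1..m}. (SOME y. y \<in> V i) \<in> V i) \<and>
      (\<forall>i\<in>{1..m}. \<forall>j\<in>{1..m}. ({i, j} \<in> {} \<longrightarrow> {SOME y. y \<in> V i, SOME y. y \<in> V j} \<in> Y) \<and>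
        ({i, j} \<in> {} \<longrightarrow>
          {inv_into {1..n} \<sigma> (SOME y. y \<in> V i), inv_into {1..n} \<sigma> (SOME y. y \<in> V j)} \<in> X))"
    by (simp add: some_in_eq)
qed

lemma prob_q_embeddable_ge:
  assumes "0 \<le> p1" "p1 \<le> 1" "0 \<le> p2" "p2 \<le> 1"
  shows "1 - (\<Sum>C\<in>configurations m n q.
            subset_expect (all_edges {1..n} <+> all_edges {1..n}) (case_sum (\<lambda>_. p1) (\<lambda>_. p2))
              (avoids (required_edges G H) (PiE {1..m} C)))
         \<le> measure_pmf.prob (pair_pmf (gnp n p1) (gnp n p2)) {(X, Y). q_embeddable m n q G H X Y}"
proof -
  let ?E = "all_edges {1..n} <+> all_edges {1..n}" and ?p = "case_sum (\<lambda>_. p1) (\<lambda>_. p2)"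
  let ?fail = "\<lambda>C. avoids (required_edges G H) (PiE {1..m} C)"
  have "1 - (\<Sum>C\<in>configurations m n q. subset_expect ?E ?p (?fail C))
      = subset_expect ?E ?p (\<lambda>T. 1 - (\<Sum>C\<in>configurations m n q. ?fail C T))"
    using finite_all_edges by (simp add: subset_expect_diff subset_expect_sum subset_expect_const)
  also have "\<dots> \<le> subset_expect ?E ?p (\<lambda>T. of_bool (q_embeddable m n q G H (Inl -` T) (Inr -` T)))"
  proof (rule subset_expect_mono)
    fix T :: "(nat set + nat set) set"
    show "1 - (\<Sum>C\<in>configurations m n q. ?fail C T) \<le> of_bool (q_embeddable m n q G H (Inl -` T) (Inr -` T))"
    proof (cases "q_embeddable m n q G H (Inl -` T) (Inr -` T)")
      case True
      then show ?thesis by (simp add: sum_nonneg avoids_def)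
    next
      case False
      then obtain C where C: "C \<in> configurations m n q" "?fail C (Inl -` T <+> Inr -` T) = 1"
        by (rule not_q_embeddable_imp_avoided_configuration)
      have "?fail C T \<le> (\<Sum>C\<in>configurations m n q. ?fail C T)"
        using C(1) card_configurations_le by (intro member_le_sum) (simp_all add: avoids_def)
      then show ?thesis using False C(2) by simp
    qed
  qed (use assms in \<open>auto split: sum.split\<close>)
  also have "\<dots> = measure_pmf.prob (pair_pmf (gnp n p1) (gnp n p2)) {(X, Y). q_embeddable m n q G H X Y}"
    by (rule prob_pair_gnp_eq_subset_expect[OF assms, symmetric])
  finally show ?thesis .
qed

lemma sum_configurations_avoided_le:
  fixes m n :: nat and q :: "nat \<Rightarrow> nat" and p1 p2 :: real
  defines "Q \<equiv> \<Sum>i\<in>{1..m}. q i"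
  assumes "m \<ge> 1" "n \<ge> 2" and q: "\<forall>i\<in>{1..m}. q i \<ge> 1"
    and G: "G \<subseteq> all_edges {1..m}" and H: "H \<subseteq> all_edges {1..m}" and edges: "card G + card H \<ge> 1"
    and p: "0 \<le> p1" "p1 \<le> 1" "0 \<le> p2" "p2 \<le> 1"
    and K: "subgraph_expectations_ge m q G H p1 p2 (3 * 2 ^ (m + 1) * real Q * ln (real n))"
  shows "(\<Sum>C\<in>configurations m n q.
            subset_expect (all_edges {1..n} <+> all_edges {1..n}) (case_sum (\<lambda>_. p1) (\<lambda>_. p2))
              (avoids (required_edges G H) (PiE {1..m} C)))
         \<le> real n powr - real Q"
proof -
  have "1 \<le> q 1" "q 1 \<le> Q" unfolding Q_def using q assms(2) by (auto intro: member_le_sum)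
  moreover have "0 < ln (real n)" using assms(3) by simp
  ultimately have "0 < 3 * 2 ^ (m + 1) * real Q * ln (real n)" by simp
  moreover have "exp (- (3 * 2 ^ (m + 1) * real Q * ln (real n) / (2 * 2 ^ m))) = real n powr (- 3 * real Q)"
    using assms(3) by (simp add: powr_def)
  ultimately have each: "subset_expect (all_edges {1..n} <+> all_edges {1..n}) (case_sum (\<lambda>_. p1) (\<lambda>_. p2))
      (avoids (required_edges G H) (PiE {1..m} C)) \<le> real n powr (- 3 * real Q)"
    if "C \<in> configurations m n q" for C
    using configuration_avoided_prob_le[OF that G H p edges _ K] by simp
  have "card (configurations m n q) \<le> n ^ (2 * Q)"
    using card_configurations_le unfolding Q_def by blast
  then have "real (card (configurations m n q)) \<le> real n ^ (2 * Q)"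
    by (metis of_nat_le_iff of_nat_power)
  also have "\<dots> = real n powr (2 * real Q)"
    using assms(3) by (simp add: powr_realpow[symmetric])
  finally have card: "real (card (configurations m n q)) \<le> real n powr (2 * real Q)" .
  have "(\<Sum>C\<in>configurations m n q.
            subset_expect (all_edges {1..n} <+> all_edges {1..n}) (case_sum (\<lambda>_. p1) (\<lambda>_. p2))
              (avoids (required_edges G H) (PiE {1..m} C)))
      \<le> real (card (configurations m n q)) * real n powr (- 3 * real Q)"
    using sum_mono[OF each] by simp
  also have "\<dots> \<le> real n powr (2 * real Q) * real n powr (- 3 * real Q)"
    using card by (rule mult_right_mono) simp
  also have "\<dots> = real n powr - real Q"
    by (simp flip: powr_add)
  finally show ?thesis .
qed

theorem lemma3p2:
  fixes m n :: nat and q :: "nat \<Rightarrow> nat" and G H :: "nat set set" and p1 p2 :: real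
  assumes "m \<ge> 1" and "n \<ge> 1"
    and "\<forall>i\<in>{1..m}. q i \<ge> 1"
    and "(\<Sum>i\<in>{1..m}. q i) \<le> n"
    and "is_graph_on {1..m} G" and "is_graph_on {1..m} H"
    and "0 \<le> p1" and "p1 \<le> 1" and "0 \<le> p2" and "p2 \<le> 1"
    and "\<forall>J. J \<subseteq> {1..m} \<longrightarrow>
           card (induced_edges G J) + card (induced_edges H J) \<ge> 1 \<longrightarrow>
           p1 ^ card (induced_edges G J) * p2 ^ card (induced_edges H J) * (\<Prod>j\<in>J. real (q j))
             \<ge> 3 * 2 ^ (m + 1) * real (\<Sum>i\<in>{1..m}. q i) * ln (real n)"
  shows "measure_pmf.prob (pair_pmf (gnp n p1) (gnp n p2))
           {(X, Y). q_embeddable m n q G H X Y}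
         \<ge> 1 - real n powr (- real (\<Sum>i\<in>{1..m}. q i))"
proof -
  have G: "G \<subseteq> all_edges {1..m}" and H: "H \<subseteq> all_edges {1..m}"
    using assms(5,6) unfolding is_graph_on_def by auto
  consider "n = 1" | "G = {}" "H = {}" | "n \<ge> 2" "card G + card H \<ge> 1"
    using assms(2) finite_graph[OF G] finite_graph[OF H]
    by (cases "n = 1"; cases "card G + card H = 0") auto
  then show ?thesis
  proof cases
    case 1
    then show ?thesis by simp
  next
    case 2
    then have "{(X, Y). q_embeddable m n q G H X Y} = UNIV"
      using q_embeddable_edgeless[OF assms(3)] by auto
    then show ?thesis by simp
  next
    case 3
    have "subgraph_expectations_ge m q G H p1 p2 (3 * 2 ^ (m + 1) * real (\<Sum>i\<in>{1..m}. q i) * ln (real n))"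
      using assms(11) unfolding subgraph_expectations_ge_def by blast
    then show ?thesis
      using prob_q_embeddable_ge[OF assms(7-10), where m = m and n = n and q = q and G = G and H = H]
        sum_configurations_avoided_le[OF assms(1) 3(1) assms(3) G H 3(2) assms(7-10)] by linarith
  qed
qed

end
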